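(* For every $\epsilon>0$ there exist infinitely many graphs $G$ such that $G$ is $\Gamma$-connected for some Abelian group $\Gamma$ of prime order but $G$ is not $\Gamma'$-connected for some Abelian group $\Gamma'$ with $|\Gamma'| \geq (2-\epsilon)|\Gamma|$. Consequently, for every $\epsilon>0$ there are infinitely many primes $k$ with $g(k) > (2-\epsilon)k$.
   Context: Graphs are finite, may have multiple edges but no loops. For an orientation $D$ of $G$ and a vertex $v$, $E^+(v)$ (resp. $E^-(v)$) is the set of edges directed out of (resp. into) $v$. For an Abelian group $\Gamma$, a graph $G$ is $\Gamma$-connected if for some (equivalently, any) orientation $D$ of $G$ and every $\beta: V(G)\to\Gamma$ with $\sum_{v}\beta(v)=0$ there is $f: E(G)\to\Gamma$ with $f(e)\neq 0$ for all $e$ and $\sum_{e\in E^+(v)} f(e)-\sum_{e\in E^-(v)} f(e)=\beta(v)$ for all $v$. For a natural number $k$, $g(k)$ is the least number such that whenever a graph $G$ is $\Gamma$-connected for some Abelian group $\Gamma$ of order $k$, $G$ is also $\Gamma'$-connected for every Abelian group $\Gamma'$ of order $|\Gamma'|\geq g(k)$. *)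

theory Defs
  imports "HOL-Algebra.Algebra" "HOL-Computational_Algebra.Primes" "HOL-Library.Extended_Nat"
begin

text \<open>A finite loopless multigraph: vertex set V, edge set E, and each edge e has
  two distinct end vertices, recorded (in an arbitrary reference order) as ends e.\<close>
definition multigraph :: "'v set \<Rightarrow> 'e set \<Rightarrow> ('e \<Rightarrow> 'v \<times> 'v) \<Rightarrow> bool" where
  "multigraph V E ends \<longleftrightarrow> finite V \<and> finite E \<and>
     (\<forall>e\<in>E. fst (ends e) \<in> V \<and> snd (ends e) \<in> V \<and> fst (ends e) \<noteq> snd (ends e))"

text \<open>Group connectivity (the group written multiplicatively as in HOL-Algebra).\<close>
definition group_connected ::
  "('a, 'm) monoid_scheme \<Rightarrow> 'v set \<Rightarrow> 'e set \<Rightarrow> ('e \<Rightarrow> 'v \<times> 'v) \<Rightarrow> bool" where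
  "group_connected \<Gamma> V E ends \<longleftrightarrow>
     (\<exists>D. (\<forall>e\<in>E. D e = ends e \<or> D e = prod.swap (ends e)) \<and>
       (\<forall>\<beta> \<in> V \<rightarrow> carrier \<Gamma>. finprod \<Gamma> \<beta> V = \<one>\<^bsub>\<Gamma>\<^esub> \<longrightarrow>
          (\<exists>f \<in> E \<rightarrow> carrier \<Gamma>. (\<forall>e\<in>E. f e \<noteq> \<one>\<^bsub>\<Gamma>\<^esub>) \<and>
             (\<forall>v\<in>V. finprod \<Gamma> f {e\<in>E. fst (D e) = v} \<otimes>\<^bsub>\<Gamma>\<^esub>
                     inv\<^bsub>\<Gamma>\<^esub> (finprod \<Gamma> f {e\<in>E. snd (D e) = v}) = \<beta> v))))"

text \<open>Finite abelian group of order k (carriers taken in nat; every finite group has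
  an isomorphic copy there).\<close>
definition fin_abgroup :: "nat monoid \<Rightarrow> bool" where
  "fin_abgroup \<Gamma> \<longleftrightarrow> comm_group \<Gamma> \<and> finite (carrier \<Gamma>)"

definition g_prop :: "nat \<Rightarrow> nat \<Rightarrow> bool" where
  "g_prop k m \<longleftrightarrow> (\<forall>(V::nat set) (E::nat set) ends. multigraph V E ends \<longrightarrow>
      (\<exists>\<Gamma>. fin_abgroup \<Gamma> \<and> card (carrier \<Gamma>) = k \<and> group_connected \<Gamma> V E ends) \<longrightarrow>
      (\<forall>\<Gamma>'. fin_abgroup \<Gamma>' \<and> card (carrier \<Gamma>') \<ge> m \<longrightarrow> group_connected \<Gamma>' V E ends))"

definition g :: "nat \<Rightarrow> enat" where
  "g k = (if \<exists>m. g_prop k m then enat (LEAST m. g_prop k m) else \<infinity>)"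

end

(* The witnesses are theta graphs: k internally disjoint paths of length L between two
   vertices. Along each path a flow with prescribed boundary is determined by its value x_i on
   the first edge of path i, shifted by the accumulated demands of the inner vertices.

   For a prime p, each path excludes at most L values of x_i; if k (p - L) >= p + k - 1, the
   Cauchy-Davenport theorem makes the sums x_1 + ... + x_k cover Z_p, so the demand at the source
   can always be met and the graph is Z_p-connected.

   For m = 2L, demand -2 at every inner vertex forces the values x_i - 2j along path i, so every
   x_i must be odd and the outflow of the source has the parity of k; a source demand of the
   other parity cannot be met, so the graph is not Z_2L-connected.

   Taking k about 4/eps and L = p - floor (p/k) - 2 satisfies both conditions with
   2L >= (2 - eps) p for every large prime p, and g(p) then exceeds 2L. *)

theory Submission
  imports Defs "HOL-Number_Theory.Cong"
begin

definition zmod_group :: "nat \<Rightarrow> nat monoid" where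
  "zmod_group m = \<lparr>carrier = {..<m}, monoid.mult = (\<lambda>x y. (x + y) mod m), one = 0\<rparr>"

lemma zmod_group_simps [simp]:
  "carrier (zmod_group m) = {..<m}"
  "x \<otimes>\<^bsub>zmod_group m\<^esub> y = (x + y) mod m"
  "\<one>\<^bsub>zmod_group m\<^esub> = 0"
  by (simp_all add: zmod_group_def)

lemma comm_group_zmod_group:
  assumes "m > 0"
  shows "comm_group (zmod_group m)"
proof (rule comm_groupI)
  fix x assume "x \<in> carrier (zmod_group m)"
  then show "\<exists>y \<in> carrier (zmod_group m). y \<otimes>\<^bsub>zmod_group m\<^esub> x = \<one>\<^bsub>zmod_group m\<^esub>"
    using assms by (intro bexI[of _ "(m - x) mod m"]) (auto simp: mod_add_left_eq)
qed (use assms in \<open>auto simp: mod_add_left_eq mod_add_right_eq add_ac\<close>)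

lemma fin_abgroup_zmod_group: "m > 0 \<Longrightarrow> fin_abgroup (zmod_group m)"
  by (simp add: fin_abgroup_def comm_group_zmod_group)

lemma inv_zmod_group:
  assumes "x < m"
  shows "inv\<^bsub>zmod_group m\<^esub> x = (m - x) mod m"
proof -
  interpret comm_group "zmod_group m" using assms by (intro comm_group_zmod_group) simp
  show ?thesis using assms by (intro inv_equality) (auto simp: mod_add_left_eq)
qed

lemma finprod_zmod_group:
  assumes "m > 0" "f \<in> A \<rightarrow> {..<m}"
  shows "finprod (zmod_group m) f A = (\<Sum>a\<in>A. f a) mod m"
proof -
  interpret comm_group "zmod_group m" using assms(1) by (rule comm_group_zmod_group)
  show ?thesis
  proof (cases "finite A")
    case True
    then show ?thesis using assms(2)
      by (induction A rule: finite_induct) (auto simp: finprod_insert mod_add_right_eq)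
  qed (simp add: finprod_infinite)
qed

lemma zmod_group_mult_inv_eq_iff_cong:
  assumes "b < m"
  shows "(x mod m) \<otimes>\<^bsub>zmod_group m\<^esub> inv\<^bsub>zmod_group m\<^esub> (y mod m) = b
     \<longleftrightarrow> [int x - int y = int b] (mod int m)"
proof -
  have "y mod m \<le> m" using assms by simp
  then have "int (m - y mod m) = int m - int y mod int m"
    by (simp add: of_nat_diff of_nat_mod)
  moreover have "int ((x mod m + (m - y mod m) mod m) mod m) = (int x + int (m - y mod m)) mod int m"
    by (simp only: of_nat_mod of_nat_add mod_add_eq)
  ultimately have "int ((x mod m + (m - y mod m) mod m) mod m) = (int x + (int m - int y mod int m)) mod int m"
    by simp
  also have "\<dots> = (int x - int y mod int m + int m) mod int m"
    by (simp add: algebra_simps)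
  also have "\<dots> = (int x - int y) mod int m"
    by (simp only: mod_add_self2 mod_diff_right_eq)
  finally have "int ((x mod m + (m - y mod m) mod m) mod m) = (int x - int y) mod int m" .
  moreover have "(x mod m) \<otimes>\<^bsub>zmod_group m\<^esub> inv\<^bsub>zmod_group m\<^esub> (y mod m) =
      (x mod m + (m - y mod m) mod m) mod m"
    using assms by (simp add: inv_zmod_group)
  moreover have "int b = int b mod int m" using assms by simp
  ultimately show ?thesis unfolding cong_def by (metis of_nat_eq_iff)
qed

definition flow_boundary :: "('e \<Rightarrow> 'v \<times> 'v) \<Rightarrow> 'e set \<Rightarrow> ('e \<Rightarrow> nat) \<Rightarrow> 'v \<Rightarrow> int" where
  "flow_boundary D E f v =
     int (\<Sum>e\<in>{e\<in>E. fst (D e) = v}. f e) - int (\<Sum>e\<in>{e\<in>E. snd (D e) = v}. f e)"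

definition zmod_flow ::
  "nat \<Rightarrow> 'v set \<Rightarrow> 'e set \<Rightarrow> ('e \<Rightarrow> 'v \<times> 'v) \<Rightarrow> ('v \<Rightarrow> nat) \<Rightarrow> ('e \<Rightarrow> nat) \<Rightarrow> bool" where
  "zmod_flow m V E D \<beta> f \<longleftrightarrow>
     f \<in> E \<rightarrow> {0<..<m} \<and> (\<forall>v\<in>V. [flow_boundary D E f v = int (\<beta> v)] (mod int m))"

lemma group_connected_zmod_group_iff:
  assumes "m > 0"
  shows "group_connected (zmod_group m) V E ends \<longleftrightarrow>
    (\<exists>D. (\<forall>e\<in>E. D e = ends e \<or> D e = prod.swap (ends e)) \<and>
      (\<forall>\<beta> \<in> V \<rightarrow> {..<m}. m dvd (\<Sum>v\<in>V. \<beta> v) \<longrightarrow> (\<exists>f. zmod_flow m V E D \<beta> f)))"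
proof -
  have sum_iff: "finprod (zmod_group m) \<beta> V = \<one>\<^bsub>zmod_group m\<^esub> \<longleftrightarrow> m dvd (\<Sum>v\<in>V. \<beta> v)"
    if "\<beta> \<in> V \<rightarrow> {..<m}" for \<beta>
    using finprod_zmod_group[OF assms that] by (simp add: mod_eq_0_iff_dvd)
  have flow_iff: "(f \<in> E \<rightarrow> {..<m} \<and> (\<forall>e\<in>E. f e \<noteq> \<one>\<^bsub>zmod_group m\<^esub>) \<and>
      (\<forall>v\<in>V. finprod (zmod_group m) f {e\<in>E. fst (D e) = v} \<otimes>\<^bsub>zmod_group m\<^esub>
         inv\<^bsub>zmod_group m\<^esub> (finprod (zmod_group m) f {e\<in>E. snd (D e) = v}) = \<beta> v))
    \<longleftrightarrow> zmod_flow m V E D \<beta> f"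
    if "\<beta> \<in> V \<rightarrow> {..<m}" for \<beta> f D
  proof (cases "f \<in> E \<rightarrow> {..<m}")
    case True
    then have restrict: "f \<in> {e\<in>E. P e} \<rightarrow> {..<m}" for P by auto
    have "finprod (zmod_group m) f {e\<in>E. fst (D e) = v} \<otimes>\<^bsub>zmod_group m\<^esub>
         inv\<^bsub>zmod_group m\<^esub> (finprod (zmod_group m) f {e\<in>E. snd (D e) = v}) = \<beta> v
      \<longleftrightarrow> [flow_boundary D E f v = int (\<beta> v)] (mod int m)" if "v \<in> V" for v
      unfolding finprod_zmod_group[OF assms restrict] flow_boundary_def
      using that \<open>\<beta> \<in> V \<rightarrow> {..<m}\<close> by (intro zmod_group_mult_inv_eq_iff_cong) auto
    then show ?thesis using True
      by (auto simp: zmod_flow_def simp del: zmod_group_simps simp add: zmod_group_simps(1,3))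
  qed (auto simp: zmod_flow_def)
  show ?thesis unfolding group_connected_def Bex_def zmod_group_simps(1)
    using sum_iff flow_iff by (simp del: zmod_group_simps cong: ball_cong_simp conj_cong)
qed

lemma flow_boundary_as_sum:
  assumes "finite E"
  shows "flow_boundary D E f v =
    (\<Sum>e\<in>E. (of_bool (fst (D e) = v) - of_bool (snd (D e) = v)) * int (f e))"
proof -
  have "(\<Sum>e\<in>E. of_bool (P e) * int (f e)) = int (\<Sum>e\<in>{e\<in>E. P e}. f e)" for P
    unfolding of_nat_sum sum.inter_filter[OF assms] by (intro sum.cong) auto
  then show ?thesis by (simp add: flow_boundary_def left_diff_distrib sum_subtractf)
qed

lemma zmod_flow_reorient:
  assumes "finite E" and D: "\<forall>e\<in>E. D e = ends e \<or> D e = prod.swap (ends e)"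
    and f: "zmod_flow m V E D \<beta> f"
  shows "zmod_flow m V E ends \<beta> (\<lambda>e. if D e = ends e then f e else m - f e)"
    (is "zmod_flow m V E ends \<beta> ?g")
proof -
  have range: "f \<in> E \<rightarrow> {0<..<m}" using f by (simp add: zmod_flow_def)
  have "[flow_boundary ends E ?g v = flow_boundary D E f v] (mod int m)" for v
    unfolding flow_boundary_as_sum[OF assms(1)]
  proof (rule cong_sum)
    fix e assume e: "e \<in> E"
    let ?a = "of_bool (fst (ends e) = v) :: int" and ?b = "of_bool (snd (ends e) = v) :: int"
    show "[(?a - ?b) * int (?g e) = (of_bool (fst (D e) = v) - of_bool (snd (D e) = v)) * int (f e)]
      (mod int m)"
    proof (cases "D e = ends e")
      case False
      then have swap: "D e = prod.swap (ends e)" and "f e < m" using D range e by auto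
      then have "(?a - ?b) * int (m - f e) = (?b - ?a) * int (f e) + (?a - ?b) * int m"
        by (simp add: of_nat_diff algebra_simps)
      then show ?thesis using False swap by (simp add: cong_iff_dvd_diff)
    qed simp
  qed
  moreover have "?g \<in> E \<rightarrow> {0<..<m}" using range by (auto simp: Pi_iff)
  ultimately show ?thesis using f unfolding zmod_flow_def by (meson cong_trans)
qed

lemma group_connected_zmod_group_iff_flows:
  assumes "m > 0" "finite E"
  shows "group_connected (zmod_group m) V E ends \<longleftrightarrow>
    (\<forall>\<beta> \<in> V \<rightarrow> {..<m}. m dvd (\<Sum>v\<in>V. \<beta> v) \<longrightarrow> (\<exists>f. zmod_flow m V E ends \<beta> f))"
proof
  assume "group_connected (zmod_group m) V E ends"
  then obtain D where D: "\<forall>e\<in>E. D e = ends e \<or> D e = prod.swap (ends e)"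
    and flows: "\<forall>\<beta> \<in> V \<rightarrow> {..<m}. m dvd (\<Sum>v\<in>V. \<beta> v) \<longrightarrow> (\<exists>f. zmod_flow m V E D \<beta> f)"
    unfolding group_connected_zmod_group_iff[OF assms(1)] by blast
  show "\<forall>\<beta> \<in> V \<rightarrow> {..<m}. m dvd (\<Sum>v\<in>V. \<beta> v) \<longrightarrow> (\<exists>f. zmod_flow m V E ends \<beta> f)"
    using flows zmod_flow_reorient[OF assms(2) D] by blast
qed (unfold group_connected_zmod_group_iff[OF assms(1)], intro exI[of _ ends], simp)

lemma sum_flow_boundary:
  assumes "finite V" "finite E" "\<forall>e\<in>E. fst (D e) \<in> V \<and> snd (D e) \<in> V"
  shows "(\<Sum>v\<in>V. flow_boundary D E f v) = 0"
proof -
  have tails: "(\<Sum>v\<in>V. \<Sum>e\<in>{e\<in>E. fst (D e) = v}. f e) = (\<Sum>e\<in>E. f e)"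
    by (rule sum.group) (use assms in auto)
  have heads: "(\<Sum>v\<in>V. \<Sum>e\<in>{e\<in>E. snd (D e) = v}. f e) = (\<Sum>e\<in>E. f e)"
    by (rule sum.group) (use assms in auto)
  show ?thesis
    unfolding flow_boundary_def sum_subtractf of_nat_sum[symmetric] tails heads by simp
qed

lemma zmod_flow_of_all_but_one:
  assumes "finite V" "finite E" and D: "\<forall>e\<in>E. fst (D e) \<in> V \<and> snd (D e) \<in> V"
    and "w \<in> V" and "m dvd (\<Sum>v\<in>V. \<beta> v)" and "f \<in> E \<rightarrow> {0<..<m}"
    and others: "\<forall>v\<in>V - {w}. [flow_boundary D E f v = int (\<beta> v)] (mod int m)"
  shows "zmod_flow m V E D \<beta> f"
proof -
  let ?S = "\<lambda>h. \<Sum>v\<in>V - {w}. h v"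
  have rest: "[?S (flow_boundary D E f) = ?S (\<lambda>v. int (\<beta> v))] (mod int m)"
    by (rule cong_sum) (use others in blast)
  have "int m dvd int (\<Sum>v\<in>V. \<beta> v)"
    using \<open>m dvd _\<close> by (simp only: int_dvd_int_iff)
  then have "[(\<Sum>v\<in>V. int (\<beta> v)) = 0] (mod int m)"
    by (simp add: cong_0_iff)
  then have "[(\<Sum>v\<in>V. flow_boundary D E f v) = (\<Sum>v\<in>V. int (\<beta> v))] (mod int m)"
    unfolding sum_flow_boundary[OF assms(1-3)] by (rule cong_sym)
  then have "[flow_boundary D E f w + ?S (flow_boundary D E f) = int (\<beta> w) + ?S (\<lambda>v. int (\<beta> v))]
      (mod int m)"
    by (simp only: sum.remove[OF \<open>finite V\<close> \<open>w \<in> V\<close>])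
  from cong_diff[OF this rest] have "[flow_boundary D E f w = int (\<beta> w)] (mod int m)"
    by simp
  then show ?thesis using assms(6) others unfolding zmod_flow_def by blast
qed

definition mod_sumset :: "nat \<Rightarrow> nat set \<Rightarrow> nat set \<Rightarrow> nat set" where
  "mod_sumset p A B = {(a + b) mod p | a b. a \<in> A \<and> b \<in> B}"

lemma mod_sumset_subset: "p > 0 \<Longrightarrow> mod_sumset p A B \<subseteq> {..<p}"
  by (auto simp: mod_sumset_def)

lemma inj_on_mod_translate:
  assumes "A \<subseteq> {..<p}"
  shows "inj_on (\<lambda>a. (a + b) mod p) (A :: nat set)"
proof (rule inj_onI)
  fix x y assume "x \<in> A" "y \<in> A" "(x + b) mod p = (y + b) mod p"
  then have "[x = y] (mod p)" using cong_add_rcancel_nat[of x b y p] by (simp add: cong_def)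
  moreover have "x < p" "y < p" using \<open>x \<in> A\<close> \<open>y \<in> A\<close> assms by auto
  ultimately show "x = y" by (simp add: cong_def)
qed

lemma mod_translate_closed_eq_all:
  fixes p d :: nat
  assumes p: "Factorial_Ring.prime p" and A: "A \<subseteq> {..<p}" "A \<noteq> {}" and d: "\<not> p dvd d"
    and closed: "\<forall>a\<in>A. (a + d) mod p \<in> A"
  shows "A = {..<p}"
proof (intro equalityI subsetI)
  fix y assume y: "y \<in> {..<p}"
  obtain a0 where "a0 \<in> A" using A(2) by blast
  have orbit: "(a0 + j * d) mod p \<in> A" for j
  proof (induction j)
    case (Suc j)
    have "(a0 + Suc j * d) mod p = ((a0 + j * d) mod p + d) mod p"
      unfolding mod_add_left_eq by (simp add: add_ac)
    then show ?case using Suc closed by auto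
  qed (use \<open>a0 \<in> A\<close> A(1) in auto)
  have "coprime d p" using p d prime_imp_coprime coprime_commute by blast
  then obtain x where x: "[d * x = 1] (mod p)" using cong_solve_coprime_nat by auto
  have "a0 < p" using \<open>a0 \<in> A\<close> A(1) by auto
  have "[a0 + d * x * (y + p - a0) = a0 + 1 * (y + p - a0)] (mod p)"
    by (intro cong_add cong_mult x cong_refl)
  also have "a0 + 1 * (y + p - a0) = y + p" using \<open>a0 < p\<close> by simp
  finally have "(a0 + (x * (y + p - a0)) * d) mod p = y"
    using y by (simp add: cong_def mult_ac)
  then show "y \<in> A" using orbit by metis
qed (use A in auto)

lemma mod_sumset_dyson_transform_subset:
  "mod_sumset p (A \<union> (\<lambda>b. (b + e) mod p) ` B) {b\<in>B. (b + e) mod p \<in> A} \<subseteq> mod_sumset p A B"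
proof
  fix y assume "y \<in> mod_sumset p (A \<union> (\<lambda>b. (b + e) mod p) ` B) {b\<in>B. (b + e) mod p \<in> A}"
  then obtain u x where y: "y = (u + x) mod p" and u: "u \<in> A \<or> (\<exists>z\<in>B. u = (z + e) mod p)"
    and x: "x \<in> B" "(x + e) mod p \<in> A"
    by (auto simp: mod_sumset_def)
  from u show "y \<in> mod_sumset p A B"
  proof
    assume "\<exists>z\<in>B. u = (z + e) mod p"
    then obtain z where "z \<in> B" "u = (z + e) mod p" by blast
    moreover have "((z + e) mod p + x) mod p = ((x + e) mod p + z) mod p"
      unfolding mod_add_left_eq by (simp add: add_ac)
    ultimately show ?thesis using x y by (auto simp: mod_sumset_def)
  qed (use x y in \<open>auto simp: mod_sumset_def\<close>)
qed

lemma card_dyson_transform: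
  fixes A B :: "nat set"
  assumes "A \<subseteq> {..<p}" "B \<subseteq> {..<p}"
  shows "card (A \<union> (\<lambda>b. (b + e) mod p) ` B) + card {b\<in>B. (b + e) mod p \<in> A} = card A + card B"
proof -
  let ?T = "\<lambda>b. (b + e) mod p"
  let ?B' = "{b\<in>B. ?T b \<in> A}" and ?C = "{b\<in>B. ?T b \<notin> A}"
  have fin: "finite A" "finite B" using assms finite_subset by blast+
  have "A \<union> ?T ` B = A \<union> ?T ` ?C" by blast
  also have "card \<dots> = card A + card (?T ` ?C)"
    by (rule card_Un_disjoint) (use fin in auto)
  also have "card (?T ` ?C) = card ?C"
    by (rule card_image, rule inj_on_subset[OF inj_on_mod_translate[OF assms(2)]]) auto
  finally have "card (A \<union> ?T ` B) = card A + card ?C" .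
  moreover have "card B = card ?B' + card ?C"
    using card_Int_Diff[OF fin(2), of "{b. ?T b \<in> A}"] by (simp add: Int_def set_diff_eq)
  ultimately show ?thesis by simp
qed

lemma exists_splitting_translate:
  fixes p :: nat
  assumes p: "Factorial_Ring.prime p" and A: "A \<subseteq> {..<p}" "A \<noteq> {}" and B: "B \<subseteq> {..<p}"
    and b12: "b1 \<in> B" "b2 \<in> B" "b1 \<noteq> b2" and small: "card (mod_sumset p A B) < p"
  shows "\<exists>e. \<exists>b\<in>B. \<exists>b'\<in>B. (b + e) mod p \<in> A \<and> (b' + e) mod p \<notin> A"
proof (rule ccontr)
  assume "\<not> ?thesis"
  then have closed_B: "(b + e) mod p \<in> A \<Longrightarrow> b' \<in> B \<Longrightarrow> (b' + e) mod p \<in> A" if "b \<in> B" for b b' e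
    using that by blast
  have "b1 < p" "b2 < p" using b12 B by auto
  define d where "d = b2 + (p - b1)"
  have shift: "(b1 + (a + (p - b1))) mod p = a" "(b2 + (a + (p - b1))) mod p = (a + d) mod p"
    if "a < p" for a
    using that \<open>b1 < p\<close> by (simp_all add: d_def add_ac)
  have closed: "\<forall>a\<in>A. (a + d) mod p \<in> A"
    using closed_B[OF b12(1) _ b12(2)] shift A(1) by (metis lessThan_iff subsetD)
  have "\<not> p dvd d"
  proof
    assume "p dvd d"
    obtain a where "a \<in> A" using A(2) by blast
    then have "a < p" using A(1) by auto
    then have "(a + d) mod p = a" using \<open>p dvd d\<close>
      by (metis add.right_neutral dvd_imp_mod_0 mod_add_right_eq mod_less)
    then have "(b2 + (a + (p - b1))) mod p = (b1 + (a + (p - b1))) mod p"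
      using shift[OF \<open>a < p\<close>] by simp
    then show False
      using inj_on_mod_translate[OF B, of "a + (p - b1)"] b12 by (auto dest: inj_onD)
  qed
  then have "A = {..<p}" by (rule mod_translate_closed_eq_all[OF p A _ closed])
  have "{..<p} \<subseteq> mod_sumset p A B"
  proof
    fix y assume "y \<in> {..<p}"
    then have "y = ((y + (p - b1)) mod p + b1) mod p" using \<open>b1 < p\<close> by (simp add: mod_add_left_eq)
    moreover have "(y + (p - b1)) mod p \<in> A" using \<open>A = {..<p}\<close> prime_gt_0_nat[OF p] by simp
    ultimately show "y \<in> mod_sumset p A B" using b12 unfolding mod_sumset_def by blast
  qed
  then show False
    using small card_mono[OF finite_subset[OF mod_sumset_subset finite_lessThan]] prime_gt_0_nat[OF p]
    by (metis card_lessThan not_le)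
qed

theorem cauchy_davenport:
  fixes p :: nat
  assumes p: "Factorial_Ring.prime p"
    and "A \<subseteq> {..<p}" "B \<subseteq> {..<p}" "A \<noteq> {}" "B \<noteq> {}"
  shows "min p (card A + card B - 1) \<le> card (mod_sumset p A B)"
  using assms(2-5)
proof (induction "card B" arbitrary: A B rule: less_induct)
  case less
  have fin: "finite A" "finite B" using less.prems finite_subset by blast+
  consider (singleton) b where "B = {b}" | (full) "p \<le> card (mod_sumset p A B)"
    | (split) b1 b2 where "b1 \<in> B" "b2 \<in> B" "b1 \<noteq> b2" "card (mod_sumset p A B) < p"
    using less.prems(4) by (metis is_singletonI' is_singleton_the_elem not_le)
  then show ?case
  proof cases
    case singleton
    then have "mod_sumset p A B = (\<lambda>a. (a + b) mod p) ` A" by (auto simp: mod_sumset_def)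
    then show ?thesis using inj_on_mod_translate[OF less.prems(1)] singleton by (simp add: card_image)
  next
    case split
    then obtain e b b' where bb': "b \<in> B" "b' \<in> B" "(b + e) mod p \<in> A" "(b' + e) mod p \<notin> A"
      using exists_splitting_translate[OF p less.prems(1,3,2)] by blast
    txt \<open>Dyson's \<open>e\<close>-transform: it keeps \<open>card A + card B\<close>, does not enlarge the sumset, and
      strictly shrinks \<open>B\<close> while keeping it nonempty.\<close>
    define A' where "A' = A \<union> (\<lambda>b. (b + e) mod p) ` B"
    define B' where "B' = {b\<in>B. (b + e) mod p \<in> A}"
    have "card B' < card B" using bb' fin by (intro psubset_card_mono) (auto simp: B'_def)
    moreover have "A' \<subseteq> {..<p}" "B' \<subseteq> {..<p}" "A' \<noteq> {}" "B' \<noteq> {}"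
      using less.prems prime_gt_0_nat[OF p] bb' by (auto simp: A'_def B'_def)
    ultimately have "min p (card A' + card B' - 1) \<le> card (mod_sumset p A' B')"
      using less.hyps by blast
    also have "\<dots> \<le> card (mod_sumset p A B)"
      using mod_sumset_dyson_transform_subset finite_subset[OF mod_sumset_subset finite_lessThan]
        prime_gt_0_nat[OF p] unfolding A'_def B'_def by (intro card_mono) auto
    finally show ?thesis
      using card_dyson_transform[OF less.prems(1,2)] unfolding A'_def B'_def by simp
  qed simp
qed

definition mod_sumsets :: "nat \<Rightarrow> (nat \<Rightarrow> nat set) \<Rightarrow> nat \<Rightarrow> nat set" where
  "mod_sumsets p S k = {(\<Sum>i<k. x i) mod p | x. \<forall>i<k. x i \<in> S i}"

lemma mod_sumsets_0 [simp]: "mod_sumsets p S 0 = {0}"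
  by (simp add: mod_sumsets_def)

lemma mod_sumsets_Suc: "mod_sumsets p S (Suc k) = mod_sumset p (mod_sumsets p S k) (S k)"
proof (intro equalityI subsetI)
  fix y assume "y \<in> mod_sumsets p S (Suc k)"
  then obtain x where y: "y = (\<Sum>i<Suc k. x i) mod p" and x: "\<forall>i<Suc k. x i \<in> S i"
    by (auto simp: mod_sumsets_def)
  have "y = ((\<Sum>i<k. x i) mod p + x k) mod p" using y by (simp add: mod_add_left_eq)
  moreover have "(\<Sum>i<k. x i) mod p \<in> mod_sumsets p S k" using x by (auto simp: mod_sumsets_def)
  ultimately show "y \<in> mod_sumset p (mod_sumsets p S k) (S k)"
    using x unfolding mod_sumset_def by blast
next
  fix y assume "y \<in> mod_sumset p (mod_sumsets p S k) (S k)"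
  then obtain x b where y: "y = ((\<Sum>i<k. x i) mod p + b) mod p"
    and x: "\<forall>i<k. x i \<in> S i" and b: "b \<in> S k"
    by (auto simp: mod_sumset_def mod_sumsets_def)
  have "(\<Sum>i<k. (x(k := b)) i) = (\<Sum>i<k. x i)" by (intro sum.cong) auto
  then have "y = (\<Sum>i<Suc k. (x(k := b)) i) mod p" using y by (simp add: mod_add_left_eq)
  moreover have "\<forall>i<Suc k. (x(k := b)) i \<in> S i" using x b by (auto simp: less_Suc_eq)
  ultimately show "y \<in> mod_sumsets p S (Suc k)" unfolding mod_sumsets_def by blast
qed

lemma mod_sumsets_subset: "p > 0 \<Longrightarrow> mod_sumsets p S k \<subseteq> {..<p}"
  by (auto simp: mod_sumsets_def)

lemma mod_sumsets_nonempty: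
  assumes "\<forall>i<k. S i \<noteq> {}"
  shows "mod_sumsets p S k \<noteq> {}"
proof -
  define x where "x i = (SOME y. y \<in> S i)" for i
  have "\<forall>i<k. x i \<in> S i" using assms by (simp add: x_def some_in_eq)
  then have "(\<Sum>i<k. x i) mod p \<in> mod_sumsets p S k"
    unfolding mod_sumsets_def by (intro CollectI exI[of _ x]) simp
  then show ?thesis by blast
qed

theorem cauchy_davenport_iterated:
  fixes p :: nat
  assumes p: "Factorial_Ring.prime p" and "\<forall>i<k. S i \<subseteq> {..<p} \<and> S i \<noteq> {}"
  shows "min p ((\<Sum>i<k. card (S i)) + 1 - k) \<le> card (mod_sumsets p S k)"
  using assms(2)
proof (induction k)
  case (Suc k)
  have "\<forall>i<k. S i \<subseteq> {..<p} \<and> S i \<noteq> {}" using Suc.prems by simp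
  then have IH: "min p ((\<Sum>i<k. card (S i)) + 1 - k) \<le> card (mod_sumsets p S k)"
    and "mod_sumsets p S k \<noteq> {}"
    using Suc.IH mod_sumsets_nonempty by auto
  have card_S: "1 \<le> card (S i)" if "i < Suc k" for i
    using Suc.prems that finite_subset[of "S i" "{..<p}"] by (auto simp: Suc_le_eq card_gt_0_iff)
  have "(\<Sum>i<k. 1) \<le> (\<Sum>i<k. card (S i))"
    by (rule sum_mono) (use card_S in simp)
  then have "k \<le> (\<Sum>i<k. card (S i))" by simp
  moreover have "1 \<le> card (S k)" using card_S by simp
  moreover have min_step: "min p (s + c - k) \<le> min p (t + c - 1)"
    if "min p (s + 1 - k) \<le> t" "1 \<le> c" "k \<le> s" for s c t :: nat
    using that unfolding min_def by (auto split: if_splits)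
  ultimately have "min p ((\<Sum>i<Suc k. card (S i)) + 1 - Suc k)
      \<le> min p (card (mod_sumsets p S k) + card (S k) - 1)"
    using min_step[OF IH] by simp
  also have "\<dots> \<le> card (mod_sumsets p S (Suc k))"
    unfolding mod_sumsets_Suc using Suc.prems \<open>mod_sumsets p S k \<noteq> {}\<close>
    by (intro cauchy_davenport[OF p mod_sumsets_subset[OF prime_gt_0_nat[OF p]]]) auto
  finally show ?case .
qed simp

lemma mult_add_less_mult: "i < k \<Longrightarrow> j < L \<Longrightarrow> i * L + j < k * (L::nat)"
proof -
  assume "i < k" "j < L"
  then have "i * L + j < Suc i * L" by simp
  also have "\<dots> \<le> k * L" using \<open>i < k\<close> by (intro mult_le_mono1) simp
  finally show ?thesis .
qed

text \<open>The theta graph with \<open>k\<close> paths of length \<open>L\<close> from vertex 0 to vertex 1: edge \<open>i * L + j\<close>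
  (\<open>j < L\<close>) is the \<open>j\<close>-th edge of path \<open>i\<close>, and the inner vertex \<open>i * L + j + 2\<close> (\<open>0 < j\<close>)
  joins edges \<open>i * L + j - 1\<close> and \<open>i * L + j\<close>.\<close>

definition theta_ends :: "nat \<Rightarrow> nat \<Rightarrow> nat \<times> nat" where
  "theta_ends L e = (if e mod L = 0 then 0 else e + 2, if e mod L = L - 1 then 1 else e + 3)"

definition theta_inner :: "nat \<Rightarrow> nat \<Rightarrow> nat set" where
  "theta_inner k L = {i * L + Suc j + 2 | i j. i < k \<and> Suc j < L}"

definition theta_vertices :: "nat \<Rightarrow> nat \<Rightarrow> nat set" where
  "theta_vertices k L = insert 0 (insert 1 (theta_inner k L))"

lemma finite_theta_vertices: "finite (theta_vertices k L)"
proof -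
  have "theta_inner k L \<subseteq> (\<lambda>(i, j). i * L + Suc j + 2) ` ({..<k} \<times> {..<L})"
    by (auto simp: theta_inner_def)
  then show ?thesis
    unfolding theta_vertices_def using finite_subset by blast
qed

lemma multigraph_theta:
  assumes "0 < L"
  shows "multigraph (theta_vertices k L) {..<k * L} (theta_ends L)"
  unfolding multigraph_def
proof (intro conjI finite_theta_vertices finite_lessThan ballI)
  fix e assume "e \<in> {..<k * L}"
  define i j where "i = e div L" and "j = e mod L"
  have e: "e = i * L + j" and "i < k" "j < L"
    using \<open>e \<in> _\<close> assms by (auto simp: i_def j_def less_mult_imp_div_less)
  show "fst (theta_ends L e) \<in> theta_vertices k L"
  proof (cases j)
    case (Suc j')
    then have "e + 2 = i * L + Suc j' + 2" "Suc j' < L" using e \<open>j < L\<close> by auto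
    then have "e + 2 \<in> theta_inner k L" using \<open>i < k\<close> unfolding theta_inner_def by blast
    then show ?thesis using Suc by (simp add: theta_ends_def theta_vertices_def j_def[symmetric])
  qed (simp add: theta_ends_def theta_vertices_def j_def)
  show "snd (theta_ends L e) \<in> theta_vertices k L"
  proof (cases "j = L - 1")
    case False
    then have "e + 3 = i * L + Suc j + 2" "Suc j < L" using e \<open>j < L\<close> by auto
    then have "e + 3 \<in> theta_inner k L" using \<open>i < k\<close> unfolding theta_inner_def by blast
    then show ?thesis using False by (simp add: theta_ends_def theta_vertices_def j_def[symmetric])
  qed (simp add: theta_ends_def theta_vertices_def j_def)
  show "fst (theta_ends L e) \<noteq> snd (theta_ends L e)"
    by (simp add: theta_ends_def)
qed

lemma flow_boundary_theta_source:
  assumes "0 < L"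
  shows "flow_boundary (theta_ends L) {..<k * L} f 0 = int (\<Sum>i<k. f (i * L))"
proof -
  have tails: "{e \<in> {..<k * L}. fst (theta_ends L e) = 0} = (\<lambda>i. i * L) ` {..<k}"
  proof (intro equalityI subsetI)
    fix e assume "e \<in> {e \<in> {..<k * L}. fst (theta_ends L e) = 0}"
    then have "e = e div L * L" "e div L < k"
      by (auto simp: theta_ends_def less_mult_imp_div_less split: if_splits)
    then show "e \<in> (\<lambda>i. i * L) ` {..<k}" by blast
  qed (use assms in \<open>auto simp: theta_ends_def\<close>)
  have heads: "{e \<in> {..<k * L}. snd (theta_ends L e) = 0} = {}"
    by (auto simp: theta_ends_def)
  have "inj_on (\<lambda>i. i * L) {..<k}" using assms by (auto intro: inj_onI)
  then show ?thesis unfolding flow_boundary_def tails heads by (simp add: sum.reindex)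
qed

lemma flow_boundary_theta_inner:
  assumes "i < k" "Suc j < L"
  shows "flow_boundary (theta_ends L) {..<k * L} f (i * L + Suc j + 2) =
    int (f (i * L + Suc j)) - int (f (i * L + j))"
proof -
  have "i * L + Suc j < k * L" "i * L + j < k * L"
    using assms by (intro mult_add_less_mult; simp)+
  moreover have "(i * L + Suc j) mod L = Suc j" "(i * L + j) mod L = j"
    using assms by simp_all
  ultimately have "{e \<in> {..<k * L}. fst (theta_ends L e) = i * L + Suc j + 2} = {i * L + Suc j}"
    "{e \<in> {..<k * L}. snd (theta_ends L e) = i * L + Suc j + 2} = {i * L + j}"
    using assms by (auto simp: theta_ends_def)
  then show ?thesis by (simp add: flow_boundary_def)
qed

lemma card_avoiding_translates:
  fixes p :: nat
  assumes "finite J"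
  shows "p - card J \<le> card {x. x < p \<and> (\<forall>j\<in>J. (x + c j) mod p \<noteq> 0)}"
proof -
  let ?bad = "\<lambda>j. {x\<in>{..<p}. (x + c j) mod p = 0}"
  have "card (?bad j) \<le> 1" for j
  proof -
    have "card (?bad j) = card ((\<lambda>x. (x + c j) mod p) ` ?bad j)"
      by (rule card_image[symmetric], rule inj_on_subset[OF inj_on_mod_translate[of "{..<p}"]]) auto
    also have "\<dots> \<le> card {0 :: nat}" by (rule card_mono) auto
    finally show ?thesis by simp
  qed
  then have "card (\<Union>j\<in>J. ?bad j) \<le> card J"
    using card_UN_le[OF assms, of ?bad] sum_mono[of J "\<lambda>j. card (?bad j)" "\<lambda>_. 1"] by simp
  moreover have "{..<p} - (\<Union>j\<in>J. ?bad j) \<subseteq> {x. x < p \<and> (\<forall>j\<in>J. (x + c j) mod p \<noteq> 0)}"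
    by auto
  then have "card ({..<p} - (\<Union>j\<in>J. ?bad j)) \<le> card {x. x < p \<and> (\<forall>j\<in>J. (x + c j) mod p \<noteq> 0)}"
    by (intro card_mono) auto
  moreover have "p - card (\<Union>j\<in>J. ?bad j) \<le> card ({..<p} - (\<Union>j\<in>J. ?bad j))"
    using diff_card_le_card_Diff[of "\<Union>j\<in>J. ?bad j" "{..<p}"] assms by simp
  ultimately show ?thesis by linarith
qed

corollary mod_sumsets_eq_lessThan:
  fixes p :: nat
  assumes p: "Factorial_Ring.prime p" and S: "\<forall>i<k. S i \<subseteq> {..<p} \<and> S i \<noteq> {}"
    and large: "p + k - 1 \<le> (\<Sum>i<k. card (S i))"
  shows "mod_sumsets p S k = {..<p}"
proof -
  have "min p ((\<Sum>i<k. card (S i)) + 1 - k) \<le> card (mod_sumsets p S k)"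
    by (rule cauchy_davenport_iterated[OF p S])
  then have "p \<le> card (mod_sumsets p S k)" using large prime_gt_0_nat[OF p] by linarith
  then show ?thesis
    using mod_sumsets_subset[OF prime_gt_0_nat[OF p]] by (intro card_seteq) auto
qed

lemma cong_int_mod_add_diff:
  fixes a b p :: nat
  shows "[int ((a + b) mod p) - int (a mod p) = int b] (mod int p)"
proof -
  have "[int ((a + b) mod p) - int (a mod p) = int (a + b) - int a] (mod int p)"
    by (intro cong_diff) (simp_all add: cong_def of_nat_mod)
  then show ?thesis by simp
qed

definition theta_prefix :: "(nat \<Rightarrow> nat) \<Rightarrow> nat \<Rightarrow> nat \<Rightarrow> nat \<Rightarrow> nat" where
  "theta_prefix \<beta> L i j = (\<Sum>t<j. \<beta> (i * L + Suc t + 2))"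

lemma zmod_flow_theta:
  fixes m :: nat and x :: "nat \<Rightarrow> nat"
  assumes L: "0 < L" and "0 < m" and "m dvd (\<Sum>v\<in>theta_vertices k L. \<beta> v)"
    and nonzero: "\<forall>i<k. \<forall>j<L. (x i + theta_prefix \<beta> L i j) mod m \<noteq> 0"
    and source: "[(\<Sum>i<k. x i) = \<beta> 0] (mod m)"
  shows "zmod_flow m (theta_vertices k L) {..<k * L} (theta_ends L) \<beta>
    (\<lambda>e. (x (e div L) + theta_prefix \<beta> L (e div L) (e mod L)) mod m)"
    (is "zmod_flow _ _ _ _ _ ?f")
proof (rule zmod_flow_of_all_but_one)
  have f_at: "?f (i * L + j) = (x i + theta_prefix \<beta> L i j) mod m" if "j < L" for i j
    using that by simp
  show "?f \<in> {..<k * L} \<rightarrow> {0<..<m}"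
  proof
    fix e assume "e \<in> {..<k * L}"
    then have "e div L < k" "e mod L < L" using L by (auto simp: less_mult_imp_div_less)
    then show "?f e \<in> {0<..<m}" using nonzero \<open>0 < m\<close> by auto
  qed
  show "\<forall>v\<in>theta_vertices k L - {1}.
      [flow_boundary (theta_ends L) {..<k * L} ?f v = int (\<beta> v)] (mod int m)"
  proof
    fix v assume "v \<in> theta_vertices k L - {1}"
    then consider "v = 0" | i j where "i < k" "Suc j < L" "v = i * L + Suc j + 2"
      by (auto simp: theta_vertices_def theta_inner_def)
    then show "[flow_boundary (theta_ends L) {..<k * L} ?f v = int (\<beta> v)] (mod int m)"
    proof cases
      case 1
      have "[(\<Sum>i<k. ?f (i * L)) = (\<Sum>i<k. x i)] (mod m)"
        using f_at[of 0] L by (intro cong_sum) (simp add: theta_prefix_def)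
      then have "[(\<Sum>i<k. ?f (i * L)) = \<beta> 0] (mod m)" using source by (rule cong_trans)
      then show ?thesis
        unfolding 1 flow_boundary_theta_source[OF L] by (simp only: cong_int_iff)
    next
      case 2
      have "?f (i * L + Suc j) = (x i + theta_prefix \<beta> L i j + \<beta> v) mod m"
        using 2 f_at[of "Suc j" i] by (simp add: theta_prefix_def add.assoc)
      moreover have "?f (i * L + j) = (x i + theta_prefix \<beta> L i j) mod m"
        using 2 f_at[of j i] by simp
      ultimately show ?thesis
        unfolding \<open>v = _\<close> flow_boundary_theta_inner[OF 2(1,2)]
        using cong_int_mod_add_diff[of "x i + theta_prefix \<beta> L i j" "\<beta> v" m] 2(3) by simp
    qed
  qed
qed (use multigraph_theta[OF L] assms(3) in \<open>auto simp: multigraph_def theta_vertices_def\<close>)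

theorem theta_zmod_prime_connected:
  fixes p k L :: nat
  assumes p: "Factorial_Ring.prime p" and L: "0 < L" "L < p" and size: "p + k - 1 \<le> k * (p - L)"
  shows "group_connected (zmod_group p) (theta_vertices k L) {..<k * L} (theta_ends L)"
  unfolding group_connected_zmod_group_iff_flows[OF prime_gt_0_nat[OF p] finite_lessThan]
proof (intro ballI impI)
  fix \<beta> assume \<beta>: "\<beta> \<in> theta_vertices k L \<rightarrow> {..<p}" and "p dvd (\<Sum>v\<in>theta_vertices k L. \<beta> v)"
  define S where "S i = {x. x < p \<and> (\<forall>j\<in>{..<L}. (x + theta_prefix \<beta> L i j) mod p \<noteq> 0)}" for i
  have card_S: "p - L \<le> card (S i)" for i
    using card_avoiding_translates[of "{..<L}" p] by (simp add: S_def)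
  have "S i \<noteq> {}" for i
  proof
    assume "S i = {}"
    then show False using card_S[of i] L by simp
  qed
  moreover have "S i \<subseteq> {..<p}" for i by (auto simp: S_def)
  moreover have "p + k - 1 \<le> (\<Sum>i<k. card (S i))"
    using size sum_mono[of "{..<k}" "\<lambda>_. p - L" "\<lambda>i. card (S i)"] card_S by simp
  ultimately have "mod_sumsets p S k = {..<p}" by (simp add: mod_sumsets_eq_lessThan[OF p])
  moreover have "\<beta> 0 < p" using \<beta> by (auto simp: theta_vertices_def)
  ultimately obtain x where x: "\<beta> 0 = (\<Sum>i<k. x i) mod p" "\<forall>i<k. x i \<in> S i"
    unfolding mod_sumsets_def by blast
  have "[(\<Sum>i<k. x i) = \<beta> 0] (mod p)" using x(1) by (simp add: cong_def)
  moreover have "\<forall>i<k. \<forall>j<L. (x i + theta_prefix \<beta> L i j) mod p \<noteq> 0"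
    using x(2) by (simp add: S_def)
  ultimately show "\<exists>f. zmod_flow p (theta_vertices k L) {..<k * L} (theta_ends L) \<beta> f"
    using zmod_flow_theta[OF L(1) prime_gt_0_nat[OF p] \<open>p dvd _\<close>] by blast
qed

lemma exists_zero_sum_update:
  fixes \<beta> :: "'v \<Rightarrow> nat"
  assumes "finite V" "w \<in> V" "m > 0" "\<beta> \<in> V \<rightarrow> {..<m}"
  obtains \<beta>' where "\<beta>' \<in> V \<rightarrow> {..<m}" "m dvd (\<Sum>v\<in>V. \<beta>' v)" "\<forall>v\<in>V - {w}. \<beta>' v = \<beta> v"
proof
  let ?s = "\<Sum>v\<in>V - {w}. \<beta> v"
  let ?\<beta>' = "\<beta>(w := (m - ?s mod m) mod m)"
  show "?\<beta>' \<in> V \<rightarrow> {..<m}" "\<forall>v\<in>V - {w}. ?\<beta>' v = \<beta> v" using assms by auto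
  have "(\<Sum>v\<in>V. ?\<beta>' v) = ?\<beta>' w + (\<Sum>v\<in>V - {w}. ?\<beta>' v)"
    by (rule sum.remove[OF assms(1,2)])
  also have "(\<Sum>v\<in>V - {w}. ?\<beta>' v) = ?s" by (intro sum.cong) auto
  finally have "(\<Sum>v\<in>V. ?\<beta>' v) mod m = ((m - ?s mod m) mod m + ?s) mod m"
    by simp
  also have "\<dots> = (m - ?s mod m + ?s mod m) mod m"
    by (simp only: mod_add_left_eq mod_add_right_eq)
  also have "\<dots> = 0" using assms(3) by simp
  finally show "m dvd (\<Sum>v\<in>V. ?\<beta>' v)" by (simp add: mod_eq_0_iff_dvd)
qed

lemma theta_flow_along_path:
  assumes L: "0 < L" and "i < k" and "j < L"
    and flow: "zmod_flow (2 * L) (theta_vertices k L) {..<k * L} (theta_ends L) \<beta> f"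
    and inner: "\<forall>v\<in>theta_inner k L. \<beta> v = 2 * L - 2"
  shows "[int (f (i * L + j)) = int (f (i * L)) - 2 * int j] (mod int (2 * L))"
  using \<open>j < L\<close>
proof (induction j)
  case (Suc j)
  have v: "i * L + Suc j + 2 \<in> theta_vertices k L" "i * L + Suc j + 2 \<in> theta_inner k L"
    using \<open>i < k\<close> Suc.prems by (auto simp: theta_vertices_def theta_inner_def)
  have "[flow_boundary (theta_ends L) {..<k * L} f (i * L + Suc j + 2)
      = int (\<beta> (i * L + Suc j + 2))] (mod int (2 * L))"
    using flow v(1) unfolding zmod_flow_def by blast
  moreover have "\<beta> (i * L + Suc j + 2) = 2 * L - 2" using inner v(2) by blast
  moreover have "int (2 * L - 2) = int (2 * L) - 2" using L by simp
  ultimately have "int (2 * L) dvd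
      (int (f (i * L + Suc j)) - (int (f (i * L + j)) - 2)) - int (2 * L)"
    unfolding flow_boundary_theta_inner[OF \<open>i < k\<close> Suc.prems]
    by (simp add: cong_iff_dvd_diff algebra_simps)
  then have "[int (f (i * L + Suc j)) = int (f (i * L + j)) - 2] (mod int (2 * L))"
    unfolding cong_iff_dvd_diff by (metis diff_add_cancel dvd_add dvd_refl)
  moreover have "[int (f (i * L + j)) - 2 = int (f (i * L)) - 2 * int j - 2] (mod int (2 * L))"
    using Suc by (intro cong_diff cong_refl) simp
  ultimately have "[int (f (i * L + Suc j)) = int (f (i * L)) - 2 * int j - 2] (mod int (2 * L))"
    by (rule cong_trans)
  then show ?case by (simp add: algebra_simps)
qed simp

lemma theta_first_edge_odd:
  assumes L: "0 < L" and "i < k"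
    and flow: "zmod_flow (2 * L) (theta_vertices k L) {..<k * L} (theta_ends L) \<beta> f"
    and inner: "\<forall>v\<in>theta_inner k L. \<beta> v = 2 * L - 2"
  shows "odd (f (i * L))"
proof
  have range: "f e \<in> {0<..<2 * L}" if "e < k * L" for e
    using flow that by (auto simp: zmod_flow_def)
  assume "even (f (i * L))"
  then obtain r where r: "f (i * L) = 2 * r" by blast
  moreover have "f (i * L) < 2 * L" using range mult_add_less_mult[OF \<open>i < k\<close> L] by simp
  ultimately have "r < L" by simp
  then have "[int (f (i * L + r)) = 0] (mod int (2 * L))"
    using theta_flow_along_path[OF L \<open>i < k\<close> \<open>r < L\<close> flow inner] r by simp
  then have "2 * L dvd f (i * L + r)" by (simp only: cong_0_iff int_dvd_int_iff)
  moreover have "f (i * L + r) \<in> {0<..<2 * L}"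
    using range mult_add_less_mult[OF \<open>i < k\<close> \<open>r < L\<close>] by simp
  ultimately show False by (auto dest: dvd_imp_le)
qed

theorem theta_not_zmod_double_connected:
  assumes L: "0 < L"
  shows "\<not> group_connected (zmod_group (2 * L)) (theta_vertices k L) {..<k * L} (theta_ends L)"
proof
  assume "group_connected (zmod_group (2 * L)) (theta_vertices k L) {..<k * L} (theta_ends L)"
  then have flows: "\<forall>\<beta> \<in> theta_vertices k L \<rightarrow> {..<2 * L}. 2 * L dvd (\<Sum>v\<in>theta_vertices k L. \<beta> v)
      \<longrightarrow> (\<exists>f. zmod_flow (2 * L) (theta_vertices k L) {..<k * L} (theta_ends L) \<beta> f)"
    using L by (simp add: group_connected_zmod_group_iff_flows)
  txt \<open>Vertex 1 will absorb the imbalance; the source demand has the parity of \<open>k + 1\<close>.\<close>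
  define \<beta>\<^sub>0 where "\<beta>\<^sub>0 v = (if v = 0 then Suc k mod 2 else 2 * L - 2)" for v :: nat
  have "\<beta>\<^sub>0 \<in> theta_vertices k L \<rightarrow> {..<2 * L}" using L by (auto simp: \<beta>\<^sub>0_def)
  then obtain \<beta> where \<beta>: "\<beta> \<in> theta_vertices k L \<rightarrow> {..<2 * L}"
    "2 * L dvd (\<Sum>v\<in>theta_vertices k L. \<beta> v)" "\<forall>v\<in>theta_vertices k L - {1}. \<beta> v = \<beta>\<^sub>0 v"
    using exists_zero_sum_update[OF finite_theta_vertices _ _ \<open>\<beta>\<^sub>0 \<in> _\<close>, of 1] L
    by (auto simp: theta_vertices_def)
  then obtain f where f: "zmod_flow (2 * L) (theta_vertices k L) {..<k * L} (theta_ends L) \<beta> f"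
    using flows by blast
  have "0 \<in> theta_vertices k L" by (simp add: theta_vertices_def)
  then have "\<beta> 0 = Suc k mod 2" using \<beta>(3) by (simp add: \<beta>\<^sub>0_def)
  have "\<beta> v = 2 * L - 2" if "v \<in> theta_inner k L" for v
  proof -
    have "v \<noteq> 0" "v \<noteq> 1" "v \<in> theta_vertices k L"
      using that by (auto simp: theta_inner_def theta_vertices_def)
    then show ?thesis using \<beta>(3) by (simp add: \<beta>\<^sub>0_def)
  qed
  have odd: "odd (f (i * L))" if "i < k" for i
    by (rule theta_first_edge_odd[OF L that f]) (use \<open>\<And>v. v \<in> theta_inner k L \<Longrightarrow> _\<close> in blast)
  have "[int (\<Sum>i<k. f (i * L)) = int (Suc k mod 2)] (mod int (2 * L))"
    using f \<open>0 \<in> _\<close> \<open>\<beta> 0 = _\<close>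
    unfolding zmod_flow_def flow_boundary_theta_source[OF L, symmetric] by auto
  then have "[(\<Sum>i<k. f (i * L)) = Suc k mod 2] (mod 2)"
    unfolding cong_int_iff by (rule cong_dvd_modulus_nat) simp
  moreover have "[(\<Sum>i<k. f (i * L)) = (\<Sum>i<k. 1)] (mod 2)"
    using odd by (intro cong_sum) (simp add: cong_def odd_iff_mod_2_eq_one)
  ultimately show False by (simp add: cong_def) presburger
qed

lemma theta_parameters:
  fixes \<epsilon> :: real and p :: nat
  assumes "\<epsilon> > 0" "nat \<lceil>8 / \<epsilon>\<rceil> + 5 \<le> p"
  obtains k L where "0 < L" "L < p" "p + k - 1 \<le> k * (p - L)"
    "(2 - \<epsilon>) * real p \<le> real (2 * L)" "p \<le> 2 * (k * L) + 4"
proof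
  txt \<open>With \<open>L = p - (p div k + 2)\<close>, \<open>p - L\<close> exceeds \<open>p / k\<close> by more than 1, which is what
    the Cauchy-Davenport bound needs, while \<open>2 L \<ge> 2 p - 2 p / k - 4 \<ge> (2 - \<epsilon>) p\<close>.\<close>
  define k where "k = nat \<lceil>4 / \<epsilon>\<rceil> + 2"
  have "2 \<le> k" by (simp add: k_def)
  then have "p div k + 2 < p" using assms(2) div_le_mono2[of 2 k p] by linarith
  then show "0 < p - (p div k + 2)" "p - (p div k + 2) < p" by simp_all
  have "k * (p div k) + p mod k = p" "p mod k < k" using \<open>2 \<le> k\<close> by simp_all
  then have "p + k - 1 \<le> k * (p div k) + k * 2" by linarith
  also have "\<dots> = k * (p div k + 2)" by (simp add: algebra_simps)
  finally have "p + k - 1 \<le> k * (p div k + 2)" .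
  moreover have "p - (p - (p div k + 2)) = p div k + 2" using \<open>p div k + 2 < p\<close> by simp
  ultimately show "p + k - 1 \<le> k * (p - (p - (p div k + 2)))" by simp
  have "2 * (p div k) \<le> p" using \<open>2 \<le> k\<close> div_le_mono2[of 2 k p] by linarith
  then have "p \<le> 2 * (p - (p div k + 2)) + 4" by linarith
  moreover have "p - (p div k + 2) \<le> k * (p - (p div k + 2))" using \<open>2 \<le> k\<close> by simp
  ultimately show "p \<le> 2 * (k * (p - (p div k + 2))) + 4" by linarith
  have "4 / \<epsilon> \<le> real k" by (simp add: k_def) linarith
  then have "4 \<le> \<epsilon> * real k" using assms(1) by (simp add: field_simps)
  have "8 / \<epsilon> \<le> real p" using assms(2) by linarith
  then have "8 \<le> \<epsilon> * real p" using assms(1) by (simp add: field_simps)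
  have "real (p div k) \<le> real p / real k" by (rule of_nat_div_le_of_nat)
  also have "\<dots> \<le> \<epsilon> * real p / 4"
  proof -
    have "4 * real p \<le> (\<epsilon> * real k) * real p"
      using \<open>4 \<le> \<epsilon> * real k\<close> by (intro mult_right_mono) simp_all
    then show ?thesis using \<open>2 \<le> k\<close> by (simp add: field_simps)
  qed
  finally show "(2 - \<epsilon>) * real p \<le> real (2 * (p - (p div k + 2)))"
    using \<open>p div k + 2 < p\<close> \<open>8 \<le> \<epsilon> * real p\<close> by (simp add: of_nat_diff algebra_simps)
qed

lemma large_prime_separating_graph:
  fixes \<epsilon> :: real
  assumes "\<epsilon> > 0" "Factorial_Ring.prime p" "nat \<lceil>8 / \<epsilon>\<rceil> + 5 \<le> p"
  obtains V E :: "nat set" and ends \<Gamma>' where "multigraph V E ends" "p \<le> 2 * card E + 4"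
    "group_connected (zmod_group p) V E ends" "fin_abgroup \<Gamma>'"
    "(2 - \<epsilon>) * real p \<le> real (card (carrier \<Gamma>'))" "\<not> group_connected \<Gamma>' V E ends"
proof -
  obtain k L where L: "0 < L" "L < p" and size: "p + k - 1 \<le> k * (p - L)"
    and "(2 - \<epsilon>) * real p \<le> real (2 * L)" "p \<le> 2 * (k * L) + 4"
    using theta_parameters[OF assms(1,3)] by blast
  then show thesis
    using that[OF multigraph_theta[OF L(1)] _ theta_zmod_prime_connected[OF assms(2) L size]
        fin_abgroup_zmod_group _ theta_not_zmod_double_connected[OF L(1)]] L(1)
    by simp
qed

lemma g_exceeds_order_of_nonconnected_group:
  fixes V E :: "nat set"
  assumes "multigraph V E ends" "fin_abgroup \<Gamma>" "group_connected \<Gamma> V E ends"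
    and "fin_abgroup \<Gamma>'" "\<not> group_connected \<Gamma>' V E ends"
  shows "g (card (carrier \<Gamma>)) = \<infinity> \<or>
    (\<exists>n. g (card (carrier \<Gamma>)) = enat n \<and> card (carrier \<Gamma>') < n)"
proof (cases "\<exists>m. g_prop (card (carrier \<Gamma>)) m")
  case True
  define n where "n = (LEAST m. g_prop (card (carrier \<Gamma>)) m)"
  have "g_prop (card (carrier \<Gamma>)) n" unfolding n_def using True by (rule LeastI_ex)
  then have "n \<le> card (carrier \<Gamma>') \<Longrightarrow> group_connected \<Gamma>' V E ends"
    using assms(1-4) unfolding g_prop_def by blast
  then have "card (carrier \<Gamma>') < n" using assms(5) by (meson not_le)
  then show ?thesis using True by (simp add: g_def n_def)
qed (simp add: g_def)

lemma exists_large_separating_graph: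
  fixes \<epsilon> :: real
  assumes "\<epsilon> > 0"
  shows "\<exists>(V::nat set) (E::nat set) ends.
            multigraph V E ends \<and> card V + card E > N \<and>
            (\<exists>\<Gamma> \<Gamma>'. fin_abgroup \<Gamma> \<and> Factorial_Ring.prime (card (carrier \<Gamma>)) \<and> group_connected \<Gamma> V E ends \<and>
                    fin_abgroup \<Gamma>' \<and> real (card (carrier \<Gamma>')) \<ge> (2 - \<epsilon>) * real (card (carrier \<Gamma>)) \<and>
                    \<not> group_connected \<Gamma>' V E ends)"
proof -
  obtain p where p: "Factorial_Ring.prime p" "nat \<lceil>8 / \<epsilon>\<rceil> + 2 * N + 9 < p"
    using bigger_prime by blast
  then have "nat \<lceil>8 / \<epsilon>\<rceil> + 5 \<le> p" by linarith
  then obtain V E :: "nat set" and ends \<Gamma>' where "multigraph V E ends" "p \<le> 2 * card E + 4"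
    "group_connected (zmod_group p) V E ends" "fin_abgroup \<Gamma>'"
    "(2 - \<epsilon>) * real p \<le> real (card (carrier \<Gamma>'))" "\<not> group_connected \<Gamma>' V E ends"
    by (rule large_prime_separating_graph[OF assms p(1)])
  moreover have "N < card V + card E" using \<open>p \<le> 2 * card E + 4\<close> p(2) by linarith
  moreover have "Factorial_Ring.prime (card (carrier (zmod_group p)))"
    "(2 - \<epsilon>) * real (card (carrier (zmod_group p))) \<le> real (card (carrier \<Gamma>'))"
    using p(1) \<open>(2 - \<epsilon>) * real p \<le> _\<close> by simp_all
  ultimately show ?thesis
    using fin_abgroup_zmod_group[OF prime_gt_0_nat[OF p(1)]] by blast
qed

lemma infinite_primes_with_large_g:
  fixes \<epsilon> :: real
  assumes "\<epsilon> > 0"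
  shows "infinite {k::nat. Factorial_Ring.prime k \<and>
            (g k = \<infinity> \<or> (\<exists>n. g k = enat n \<and> real n > (2 - \<epsilon>) * real k))}"
  unfolding infinite_nat_iff_unbounded_le
proof
  fix m
  obtain p where p: "Factorial_Ring.prime p" "m + nat \<lceil>8 / \<epsilon>\<rceil> + 5 < p"
    using bigger_prime by blast
  then have "nat \<lceil>8 / \<epsilon>\<rceil> + 5 \<le> p" by linarith
  then obtain V E :: "nat set" and ends \<Gamma>' where G: "multigraph V E ends" "p \<le> 2 * card E + 4"
    "group_connected (zmod_group p) V E ends" "fin_abgroup \<Gamma>'"
    "(2 - \<epsilon>) * real p \<le> real (card (carrier \<Gamma>'))" "\<not> group_connected \<Gamma>' V E ends"
    by (rule large_prime_separating_graph[OF assms p(1)])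
  have "g p = \<infinity> \<or> (\<exists>n. g p = enat n \<and> card (carrier \<Gamma>') < n)"
    using g_exceeds_order_of_nonconnected_group[OF G(1) _ G(3,4,6)]
      fin_abgroup_zmod_group[OF prime_gt_0_nat[OF p(1)]] by simp
  then have "g p = \<infinity> \<or> (\<exists>n. g p = enat n \<and> real n > (2 - \<epsilon>) * real p)"
    using G(5) by (meson of_nat_less_iff order_le_less_trans)
  then show "\<exists>k\<ge>m. k \<in> {k. Factorial_Ring.prime k \<and>
      (g k = \<infinity> \<or> (\<exists>n. g k = enat n \<and> real n > (2 - \<epsilon>) * real k))}"
    using p by (intro exI[of _ p]) auto
qed

theorem corollary3p3:
  fixes \<epsilon> :: real
  assumes "\<epsilon> > 0"
  shows "(\<forall>N::nat. \<exists>(V::nat set) (E::nat set) ends.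
            multigraph V E ends \<and> card V + card E > N \<and>
            (\<exists>\<Gamma> \<Gamma>'. fin_abgroup \<Gamma> \<and> Factorial_Ring.prime (card (carrier \<Gamma>)) \<and> group_connected \<Gamma> V E ends \<and>
                    fin_abgroup \<Gamma>' \<and> real (card (carrier \<Gamma>')) \<ge> (2 - \<epsilon>) * real (card (carrier \<Gamma>)) \<and>
                    \<not> group_connected \<Gamma>' V E ends))
       \<and> infinite {k::nat. Factorial_Ring.prime k \<and>
            (g k = \<infinity> \<or> (\<exists>n. g k = enat n \<and> real n > (2 - \<epsilon>) * real k))}"
  using exists_large_separating_graph[OF assms] infinite_primes_with_large_g[OF assms] by blast

end
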